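(* Let $\sigma>0$ and $V,\gamma,\varepsilon>0$ satisfy $\sqrt{\frac{1+\sigma}{\sigma}}<\frac{V+\gamma\varepsilon}{\sqrt\sigma}<\zeta_\sigma$. Let $n_s:=\frac{V+\gamma\varepsilon}{\sqrt\sigma}$ and \[ g(n):=\frac{(V+\gamma\varepsilon)^2}{n}+\sigma n+e^{H(n)},\qquad H(n):=\frac{(V+\gamma\varepsilon)^2}{2}\Big(1-\frac1{n^2}\Big)-\sigma\ln n\quad(n>0). \] Then $g(1)>g(n_s)$.
   Context: $\zeta_\sigma$ denotes the unique root $z>1$ of $z^{\sigma}[\sigma(z-1)^2+1]=\exp(\tfrac{\sigma}{2}(z^2-1))$ on $(1,\infty)$. *)

theory Defs
  imports Complex_Main
begin

definition zeta :: "real \<Rightarrow> real" where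
  "zeta \<sigma> = (THE z. z > 1 \<and>
      z powr \<sigma> * (\<sigma> * (z - 1)^2 + 1) = exp (\<sigma> / 2 * (z^2 - 1)))"

text \<open>H(n) with parameter A = V + gamma*eps.\<close>
definition H :: "real \<Rightarrow> real \<Rightarrow> real \<Rightarrow> real" where
  "H \<sigma> A n = A^2 / 2 * (1 - 1 / n^2) - \<sigma> * ln n"

definition g :: "real \<Rightarrow> real \<Rightarrow> real \<Rightarrow> real" where
  "g \<sigma> A n = A^2 / n + \<sigma> * n + exp (H \<sigma> A n)"

end

theory Submission
  imports Defs
begin

text \<open>Taking logarithms, \<open>\<zeta>\<^sub>\<sigma>\<close> is the unique zero \<open>z > 1\<close> of
  \<open>F(z) = \<sigma> ln z + ln (\<sigma>(z - 1)\<^sup>2 + 1) - \<sigma>/2 (z\<^sup>2 - 1)\<close>, whose derivative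
  \<open>\<sigma>(z - 1)\<^sup>2 (1 - \<sigma>(z\<^sup>2 - 1)) / (z(\<sigma>(z - 1)\<^sup>2 + 1))\<close> changes sign only at
  \<open>m = \<surd>(1 + 1/\<sigma>)\<close>. As \<open>F(1) = 0\<close>, \<open>F\<close> rises on \<open>[1, m]\<close> and then falls to \<open>-\<infinity>\<close>,
  so \<open>F > 0\<close> on \<open>(1, \<zeta>\<^sub>\<sigma>)\<close>. With \<open>A = \<surd>\<sigma> n\<close> one has \<open>g(1) = \<sigma> n\<^sup>2 + \<sigma> + 1\<close> and
  \<open>g(n) = 2\<sigma> n + e\<^bsup>H(n)\<^esup>\<close>, and \<open>F(n) > 0\<close> says exactly \<open>e\<^bsup>H(n)\<^esup> < \<sigma>(n - 1)\<^sup>2 + 1\<close>,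
  which is \<open>g(n) < g(1)\<close>.\<close>

definition zeta_residual :: "real \<Rightarrow> real \<Rightarrow> real" where
  "zeta_residual \<sigma> z = \<sigma> * ln z + ln (\<sigma> * (z - 1)^2 + 1) - \<sigma> / 2 * (z^2 - 1)"

lemma scaled_square_plus_one_pos:
  fixes \<sigma> z :: real
  assumes "\<sigma> \<ge> 0"
  shows "\<sigma> * (z - 1)^2 + 1 > 0"
  using assms by (simp add: add_nonneg_pos)

lemma zeta_residual_one [simp]: "zeta_residual \<sigma> 1 = 0"
  by (simp add: zeta_residual_def)

lemma zeta_equation_iff_residual_zero:
  fixes \<sigma> z :: real
  assumes "\<sigma> > 0" "z > 0"
  shows "z powr \<sigma> * (\<sigma> * (z - 1)^2 + 1) = exp (\<sigma> / 2 * (z^2 - 1)) \<longleftrightarrow>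
    zeta_residual \<sigma> z = 0"
proof -
  have pos: "z powr \<sigma> * (\<sigma> * (z - 1)^2 + 1) > 0"
    using assms scaled_square_plus_one_pos [of \<sigma> z] by simp
  have "z powr \<sigma> * (\<sigma> * (z - 1)^2 + 1) = exp (\<sigma> / 2 * (z^2 - 1)) \<longleftrightarrow>
      ln (z powr \<sigma> * (\<sigma> * (z - 1)^2 + 1)) = \<sigma> / 2 * (z^2 - 1)"
    using pos by (metis exp_ln ln_exp)
  also have "ln (z powr \<sigma> * (\<sigma> * (z - 1)^2 + 1)) = \<sigma> * ln z + ln (\<sigma> * (z - 1)^2 + 1)"
    using assms scaled_square_plus_one_pos [of \<sigma> z] by (simp add: ln_mult ln_powr)
  finally show ?thesis
    unfolding zeta_residual_def by linarith
qed

lemma has_real_derivative_zeta_residual: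
  fixes \<sigma> z :: real
  assumes "\<sigma> > 0" "z > 0"
  shows "(zeta_residual \<sigma> has_real_derivative
    \<sigma> * (z - 1)^2 * (1 - \<sigma> * (z^2 - 1)) / (z * (\<sigma> * (z - 1)^2 + 1))) (at z)"
proof -
  define d where "d = \<sigma> * (z - 1)^2 + 1"
  have d: "d > 0"
    unfolding d_def using assms(1) scaled_square_plus_one_pos by simp
  have "(zeta_residual \<sigma> has_real_derivative
      \<sigma> * (1 / z) + \<sigma> * (2 * (z - 1)) / d - \<sigma> / 2 * (2 * z)) (at z)"
    unfolding zeta_residual_def [abs_def] d_def
    using assms d [unfolded d_def]
    by (auto intro!: derivative_eq_intros simp: power2_eq_square)
  moreover have "\<sigma> * (1 / z) + \<sigma> * (2 * (z - 1)) / d - \<sigma> / 2 * (2 * z) =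
      \<sigma> * (z - 1)^2 * (1 - \<sigma> * (z^2 - 1)) / (z * d)"
  proof -
    have "(\<sigma> * (1 / z) + \<sigma> * (2 * (z - 1)) / d - \<sigma> / 2 * (2 * z)) * (z * d) =
        \<sigma> * d + 2 * \<sigma> * z * (z - 1) - \<sigma> * z^2 * d"
      using assms(2) d by (simp add: field_simps power2_eq_square)
    also have "\<dots> = \<sigma> * (z - 1)^2 * (1 - \<sigma> * (z^2 - 1))"
      unfolding d_def by (simp add: algebra_simps power2_eq_square)
    finally have "(\<sigma> * (1 / z) + \<sigma> * (2 * (z - 1)) / d - \<sigma> / 2 * (2 * z)) * (z * d) =
        \<sigma> * (z - 1)^2 * (1 - \<sigma> * (z^2 - 1))" .
    moreover have "z * d \<noteq> 0"
      using assms(2) d by simp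
    ultimately show ?thesis
      by (simp add: eq_divide_eq)
  qed
  ultimately show ?thesis
    unfolding d_def by (rule DERIV_cong)
qed

lemma continuous_on_zeta_residual:
  fixes \<sigma> a b :: real
  assumes "\<sigma> > 0" "a > 0"
  shows "continuous_on {a..b} (zeta_residual \<sigma>)"
proof (rule DERIV_continuous_on)
  fix x assume "x \<in> {a..b}"
  then have "x > 0"
    using assms(2) by simp
  then show "(zeta_residual \<sigma> has_real_derivative
      \<sigma> * (x - 1)^2 * (1 - \<sigma> * (x^2 - 1)) / (x * (\<sigma> * (x - 1)^2 + 1))) (at x within {a..b})"
    using has_real_derivative_zeta_residual [OF assms(1)] has_field_derivative_at_within by blast
qed

lemma zeta_residual_strict_increasing:
  fixes \<sigma> a b :: real
  assumes "\<sigma> > 0" "1 \<le> a" "a < b" "b \<le> sqrt (1 + 1 / \<sigma>)"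
  shows "zeta_residual \<sigma> a < zeta_residual \<sigma> b"
proof (rule DERIV_pos_imp_increasing_open [OF \<open>a < b\<close>])
  fix x assume x: "a < x" "x < b"
  have "x^2 < 1 + 1 / \<sigma>"
    using x assms real_sqrt_less_iff [of "x^2" "1 + 1 / \<sigma>"] by simp
  then have "\<sigma> * (x^2 - 1) < 1"
    using assms(1) by (simp add: field_simps)
  moreover have "\<sigma> * (x - 1)^2 > 0" "x * (\<sigma> * (x - 1)^2 + 1) > 0"
    using assms x scaled_square_plus_one_pos [of \<sigma> x] by simp_all
  ultimately have "\<sigma> * (x - 1)^2 * (1 - \<sigma> * (x^2 - 1)) / (x * (\<sigma> * (x - 1)^2 + 1)) > 0"
    by simp
  then show "\<exists>y. (zeta_residual \<sigma> has_real_derivative y) (at x) \<and> y > 0"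
    using has_real_derivative_zeta_residual [OF assms(1), of x] assms(2) x by auto
qed (use continuous_on_zeta_residual [OF assms(1), of a] assms(2) in simp)

lemma zeta_residual_strict_decreasing:
  fixes \<sigma> a b :: real
  assumes "\<sigma> > 0" "sqrt (1 + 1 / \<sigma>) \<le> a" "a < b"
  shows "zeta_residual \<sigma> b < zeta_residual \<sigma> a"
proof -
  have "sqrt (1 + 1 / \<sigma>) > 1"
    using assms(1) by simp
  then have a: "a > 1"
    using assms(2) by linarith
  show ?thesis
  proof (rule DERIV_neg_imp_decreasing_open [OF \<open>a < b\<close>])
    fix x assume x: "a < x" "x < b"
    have "1 + 1 / \<sigma> < x^2"
      using x assms a real_sqrt_less_iff [of "1 + 1 / \<sigma>" "x^2"] by simp
    then have "1 < \<sigma> * (x^2 - 1)"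
      using assms(1) by (simp add: field_simps)
    moreover have "\<sigma> * (x - 1)^2 > 0" "x * (\<sigma> * (x - 1)^2 + 1) > 0"
      using assms x a scaled_square_plus_one_pos [of \<sigma> x] by simp_all
    ultimately have "\<sigma> * (x - 1)^2 * (1 - \<sigma> * (x^2 - 1)) / (x * (\<sigma> * (x - 1)^2 + 1)) < 0"
      by (simp add: divide_neg_pos mult_pos_neg)
    then show "\<exists>y. (zeta_residual \<sigma> has_real_derivative y) (at x) \<and> y < 0"
      using has_real_derivative_zeta_residual [OF assms(1), of x] x a by auto
  qed (use continuous_on_zeta_residual [OF assms(1), of a] a in simp)
qed

text \<open>With \<open>ln b \<le> b - 1\<close> and \<open>ln (\<sigma>(b - 1)\<^sup>2 + 1) \<le> 2 \<surd>\<sigma> (b - 1)\<close> one gets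
  \<open>F(b) \<le> (b - 1)(\<sigma> + 2\<surd>\<sigma> - \<sigma>(b + 1)/2)\<close>; the point \<open>b = 2 + 4/\<surd>\<sigma>\<close> makes the
  second factor equal to \<open>-\<sigma>/2\<close>.\<close>

lemma zeta_residual_neg_witness:
  fixes \<sigma> :: real
  assumes "\<sigma> > 0"
  shows "zeta_residual \<sigma> (2 + 4 / sqrt \<sigma>) < 0"
proof -
  define b where "b = 2 + 4 / sqrt \<sigma>"
  define r where "r = sqrt \<sigma>"
  have r: "r > 0" "r^2 = \<sigma>"
    using assms unfolding r_def by auto
  have b: "b > 1"
    unfolding b_def using assms by (simp add: add_pos_pos)
  have log_b: "\<sigma> * ln b \<le> \<sigma> * (b - 1)"
    using assms b ln_le_minus_one [of b] by simp
  have "\<sigma> * (b - 1)^2 + 1 \<le> (r * (b - 1) + 1)^2"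
    using r b by (simp add: power2_eq_square algebra_simps)
  then have "ln (\<sigma> * (b - 1)^2 + 1) \<le> ln ((r * (b - 1) + 1)^2)"
    using scaled_square_plus_one_pos [of \<sigma> b] assms by (intro ln_mono) simp_all
  also have "\<dots> = 2 * ln (r * (b - 1) + 1)"
    using r b by (simp add: ln_realpow)
  also have "\<dots> \<le> 2 * (r * (b - 1))"
    using r b ln_le_minus_one [of "r * (b - 1) + 1"] by (simp add: add_pos_pos)
  finally have "zeta_residual \<sigma> b \<le> \<sigma> * (b - 1) + 2 * r * (b - 1) - \<sigma> / 2 * (b^2 - 1)"
    using log_b unfolding zeta_residual_def by linarith
  also have "\<dots> = (b - 1) * (\<sigma> + 2 * r - \<sigma> * (b + 1) / 2)"
    by (simp add: algebra_simps power2_eq_square)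
  also have "\<sigma> + 2 * r - \<sigma> * (b + 1) / 2 = - \<sigma> / 2"
    unfolding b_def r_def [symmetric] using r by (simp add: field_simps power2_eq_square)
  finally have "zeta_residual \<sigma> b \<le> (b - 1) * (- \<sigma> / 2)" .
  also have "\<dots> < 0"
    using assms b by (simp add: mult_pos_neg)
  finally show ?thesis
    unfolding b_def .
qed

lemma zeta_residual_turning_point_pos:
  fixes \<sigma> :: real
  assumes "\<sigma> > 0"
  shows "zeta_residual \<sigma> (sqrt (1 + 1 / \<sigma>)) > 0"
  using zeta_residual_strict_increasing [OF assms, of 1 "sqrt (1 + 1 / \<sigma>)"] assms by simp

lemma zeta_residual_root_gt_turning_point:
  fixes \<sigma> z :: real
  assumes "\<sigma> > 0" "z > 1" "zeta_residual \<sigma> z = 0"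
  shows "z > sqrt (1 + 1 / \<sigma>)"
proof (rule ccontr)
  assume "\<not> ?thesis"
  then have "zeta_residual \<sigma> 1 < zeta_residual \<sigma> z"
    using zeta_residual_strict_increasing [OF assms(1), of 1 z] assms(2) by simp
  then show False
    using assms(3) by simp
qed

lemma zeta_residual_root_exists:
  fixes \<sigma> :: real
  assumes "\<sigma> > 0"
  obtains z where "z > 1" "zeta_residual \<sigma> z = 0"
proof -
  define m where "m = sqrt (1 + 1 / \<sigma>)"
  define b where "b = 2 + 4 / sqrt \<sigma>"
  have m: "m > 1"
    unfolding m_def using assms by simp
  have "m \<le> sqrt ((1 + 1 / sqrt \<sigma>)^2)"
    unfolding m_def real_sqrt_le_iff using assms by (simp add: power2_eq_square field_simps)
  also have "\<dots> < b"
    unfolding b_def using assms divide_strict_right_mono [of 1 4 "sqrt \<sigma>"] by simp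
  finally have "m < b" .
  then obtain z where z: "m \<le> z" "zeta_residual \<sigma> z = 0"
    using IVT2' [of "zeta_residual \<sigma>" b 0 m] continuous_on_zeta_residual [OF assms, of m b] m
      zeta_residual_neg_witness [OF assms] zeta_residual_turning_point_pos [OF assms]
    unfolding m_def b_def by fastforce
  have "z > 1"
    using m z(1) by linarith
  with z(2) show ?thesis
    using that by blast
qed

lemma zeta_residual_root_unique:
  fixes \<sigma> y z :: real
  assumes "\<sigma> > 0" "y > 1" "z > 1" "zeta_residual \<sigma> y = 0" "zeta_residual \<sigma> z = 0"
  shows "y = z"
proof (rule ccontr)
  have "y > sqrt (1 + 1 / \<sigma>)" "z > sqrt (1 + 1 / \<sigma>)"
    using zeta_residual_root_gt_turning_point assms by auto
  moreover assume "y \<noteq> z"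
  ultimately show False
    using zeta_residual_strict_decreasing [OF assms(1), of y z]
      zeta_residual_strict_decreasing [OF assms(1), of z y] assms(4,5)
    by (cases "y < z") auto
qed

lemma zeta_residual_zeta:
  fixes \<sigma> :: real
  assumes "\<sigma> > 0"
  shows "zeta_residual \<sigma> (zeta \<sigma>) = 0"
proof -
  obtain z where z: "z > 1" "zeta_residual \<sigma> z = 0"
    using zeta_residual_root_exists [OF assms] .
  have "zeta \<sigma> = z"
    unfolding zeta_def
  proof (rule the_equality)
    show "z > 1 \<and> z powr \<sigma> * (\<sigma> * (z - 1)^2 + 1) = exp (\<sigma> / 2 * (z^2 - 1))"
      using z zeta_equation_iff_residual_zero [OF assms, of z] by simp
  next
    fix y assume "y > 1 \<and> y powr \<sigma> * (\<sigma> * (y - 1)^2 + 1) = exp (\<sigma> / 2 * (y^2 - 1))"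
    then show "y = z"
      using z zeta_equation_iff_residual_zero [OF assms, of y]
        zeta_residual_root_unique [OF assms, of y z] by simp
  qed
  with z(2) show ?thesis
    by simp
qed

lemma zeta_residual_pos_below_zeta:
  fixes \<sigma> n :: real
  assumes "\<sigma> > 0" "1 < n" "n < zeta \<sigma>"
  shows "zeta_residual \<sigma> n > 0"
proof (cases "n \<le> sqrt (1 + 1 / \<sigma>)")
  case True
  then show ?thesis
    using zeta_residual_strict_increasing [OF assms(1), of 1 n] assms(2) by simp
next
  case False
  then show ?thesis
    using zeta_residual_strict_decreasing [OF assms(1), of n "zeta \<sigma>"] assms(3)
      zeta_residual_zeta [OF assms(1)] by simp
qed

lemma g_one: "g \<sigma> A 1 = A^2 + \<sigma> + 1"
  by (simp add: g_def H_def)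

lemma g_scaled:
  fixes \<sigma> n :: real
  assumes "\<sigma> > 0" "n > 0"
  shows "g \<sigma> (sqrt \<sigma> * n) n = 2 * \<sigma> * n + exp (\<sigma> / 2 * (n^2 - 1) - \<sigma> * ln n)"
proof -
  have A: "(sqrt \<sigma> * n)^2 = \<sigma> * n^2"
    using assms(1) by (simp add: power_mult_distrib)
  have "H \<sigma> (sqrt \<sigma> * n) n = \<sigma> / 2 * (n^2 - 1) - \<sigma> * ln n"
    unfolding H_def A using assms(2) by (simp add: field_simps power2_eq_square)
  then show ?thesis
    unfolding g_def A using assms(2) by (simp add: power2_eq_square)
qed

lemma g_scaled_less_g_one:
  fixes \<sigma> n :: real
  assumes "\<sigma> > 0" "n > 0" "zeta_residual \<sigma> n > 0"
  shows "g \<sigma> (sqrt \<sigma> * n) n < g \<sigma> (sqrt \<sigma> * n) 1"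
proof -
  have "\<sigma> / 2 * (n^2 - 1) - \<sigma> * ln n < ln (\<sigma> * (n - 1)^2 + 1)"
    using assms(3) unfolding zeta_residual_def by simp
  then have "exp (\<sigma> / 2 * (n^2 - 1) - \<sigma> * ln n) < exp (ln (\<sigma> * (n - 1)^2 + 1))"
    by simp
  also have "\<dots> = \<sigma> * (n - 1)^2 + 1"
    using scaled_square_plus_one_pos [of \<sigma> n] assms(1) by simp
  finally have "g \<sigma> (sqrt \<sigma> * n) n < 2 * \<sigma> * n + \<sigma> * (n - 1)^2 + 1"
    using g_scaled [OF assms(1,2)] by simp
  also have "\<dots> = g \<sigma> (sqrt \<sigma> * n) 1"
    unfolding g_one using assms(1) by (simp add: power_mult_distrib power2_eq_square algebra_simps)
  finally show ?thesis .
qed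

theorem lemma2p1:
  fixes \<sigma> V \<gamma> \<epsilon> :: real
  assumes "\<sigma> > 0" "V > 0" "\<gamma> > 0" "\<epsilon> > 0"
    and "sqrt ((1 + \<sigma>) / \<sigma>) < (V + \<gamma> * \<epsilon>) / sqrt \<sigma>"
    and "(V + \<gamma> * \<epsilon>) / sqrt \<sigma> < zeta \<sigma>"
  shows "g \<sigma> (V + \<gamma> * \<epsilon>) 1 > g \<sigma> (V + \<gamma> * \<epsilon>) ((V + \<gamma> * \<epsilon>) / sqrt \<sigma>)"
proof -
  define A where "A = V + \<gamma> * \<epsilon>"
  define n where "n = A / sqrt \<sigma>"
  have A: "A = sqrt \<sigma> * n"
    unfolding n_def using assms(1) by simp
  have "1 < sqrt ((1 + \<sigma>) / \<sigma>)"
    using assms(1) by simp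
  then have "1 < n"
    using assms(5) unfolding n_def A_def by linarith
  moreover have "n < zeta \<sigma>"
    using assms(6) unfolding n_def A_def .
  ultimately have "zeta_residual \<sigma> n > 0"
    using zeta_residual_pos_below_zeta [OF assms(1)] by blast
  then have "g \<sigma> A n < g \<sigma> A 1"
    unfolding A using g_scaled_less_g_one [OF assms(1)] \<open>1 < n\<close> by simp
  then show ?thesis
    unfolding A_def n_def .
qed

end
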